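(* Let $(E_j)_{j\ge1}$ be i.i.d. standard exponential random variables and $(U_j)_{j\ge1}$ i.i.d. uniform $[0,1]$ random variables, all independent. For $k\ge1$ let $$A_k=\Big(E_1+\frac{E_2}{U_1}+\dots+\frac{E_k}{U_1\cdots U_{k-1}}\Big)\big(1-U_1\cdots U_k\big).$$ Then for every integer $k\ge1$ and every $s>0$, $$P(A_k>s)=-I(s)\int_0^s e^{\xi}p_{k-1}(\xi)\,d\xi+\sum_{j=0}^{k-1}p_j(s).$$
   Context: $\sigma_1(k,j)$ are the unsigned Stirling numbers of the first kind ($\sigma_1(k,j)=0$ for $k<j$, $\sigma_1(0,0)=1$); $p_j(t)=e^{-t}\sum_{k=j}^\infty \frac{t^k}{k!}\frac{\sigma_1(k,j)}{k!}$ for $j\ge0$; $I(s)=\int_s^\infty \frac{e^{-\xi}}{\xi}\,d\xi$. *)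

theory Defs
  imports "HOL-Probability.Probability" "HOL-Combinatorics.Stirling"
begin

text \<open>Unsigned Stirling numbers of the first kind: library constant stirling.
  p_j(t) = exp(-t) * sum_{k >= j} t^k/k! * sigma_1(k,j)/k!  (sum reindexed k = n + j).\<close>
definition pfun :: "nat \<Rightarrow> real \<Rightarrow> real" where
  "pfun j t = exp (- t) *
     (\<Sum>n. t ^ (n + j) / fact (n + j) * real (stirling (n + j) j) / fact (n + j))"

definition Ifun :: "real \<Rightarrow> real" where
  "Ifun s = (LBINT \<xi>=ereal s..\<infinity>. exp (- \<xi>) / \<xi>)"

definition Avar :: "(nat \<Rightarrow> 'a \<Rightarrow> real) \<Rightarrow> (nat \<Rightarrow> 'a \<Rightarrow> real) \<Rightarrow> nat \<Rightarrow> 'a \<Rightarrow> real" where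
  "Avar E U k \<omega> = (\<Sum>i=1..k. E i \<omega> / (\<Prod>l=1..i-1. U l \<omega>)) * (1 - (\<Prod>l=1..k. U l \<omega>))"

end

(*
  Write T_k = E_1 + E_2/U_1 + ... + E_k/(U_1 ... U_(k-1)) and P_k = U_1 ... U_k, so that
  A_k = T_k (1 - P_k).  As (T_(k+1), P_(k+1)) = (T_k + E_(k+1)/P_k, P_k U_(k+1)) with
  (E_(k+1), U_(k+1)) independent of (T_k, P_k), the joint density of (T_k, P_k) is propagated
  by an explicit transition kernel; by induction it is e^(-t) h_(k-1)(t (1 - p)) on t >= 0,
  0 <= p <= 1, where h_j(x) = sum_m sigma_1(m, j) x^m / (m!)^2 = e^x p_j(x).  The induction
  step is the differential equation h_j' + x h_j'' - x h_j' = h_(j-1), which is the recurrence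
  of the Stirling numbers.

  Integrating out p gives P(A_k > s) = int_s^oo e^(-t) (G(t) - G(s)) / t dt with
  G(x) = int_0^x h_(k-1).  Splitting off G(s) I(s) leaves int_s^oo e^(-t) G(t) / t dt, which
  equals e^(-s) sum_(j<k) h_j(s): the derivatives agree by the same recurrence (the sum
  telescopes), and at s = 0 both sides are 1, the left one being the total mass of the density.
*)

theory Submission
  imports Defs
begin

section \<open>Entire power series\<close>

lemma fps_conv_radius_eq_infinity_if_le_inverse_fact:
  fixes f :: "'a :: {banach, real_normed_div_algebra} fps"
  assumes "\<And>n. norm (fps_nth f n) \<le> 1 / fact n"
  shows "fps_conv_radius f = \<infinity>"
  unfolding fps_conv_radius_def
proof (rule conv_radius_inftyI'')
  fix z :: 'a
  show "summable (\<lambda>n. fps_nth f n * z ^ n)"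
  proof (rule summable_comparison_test')
    show "summable (\<lambda>n. norm z ^ n / fact n)"
      using summable_exp[of "norm z"] by (simp add: divide_inverse mult.commute)
    fix n
    have "norm (fps_nth f n * z ^ n) = norm (fps_nth f n) * norm z ^ n"
      by (simp add: norm_mult norm_power)
    also have "\<dots> \<le> 1 / fact n * norm z ^ n"
      by (rule mult_right_mono[OF assms]) simp
    finally show "norm (fps_nth f n * z ^ n) \<le> norm z ^ n / fact n" by simp
  qed
qed

lemma eval_fps_nonneg:
  fixes f :: "real fps"
  assumes "\<And>n. 0 \<le> fps_nth f n" and "0 \<le> x" and "norm x < fps_conv_radius f"
  shows "0 \<le> eval_fps f x"
  unfolding eval_fps_def using assms by (intro suminf_nonneg summable_fps) auto

lemma borel_measurable_eval_fps:
  fixes f :: "real fps"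
  assumes "fps_conv_radius f = \<infinity>"
  shows "eval_fps f \<in> borel_measurable borel"
  using continuous_on_eval_fps[of f] assms by (intro borel_measurable_continuous_onI) simp

lemma fps_conv_radius_deriv_eq_infinity [simp]:
  fixes f :: "'a :: {banach, real_normed_field} fps"
  assumes "fps_conv_radius f = \<infinity>"
  shows "fps_conv_radius (fps_deriv f) = \<infinity>"
  using fps_conv_radius_deriv[of f] assms by (metis ereal_infty_less_eq(1))

lemma fps_conv_radius_add_eq_infinity [simp]:
  fixes f g :: "'a :: {banach, real_normed_div_algebra} fps"
  assumes "fps_conv_radius f = \<infinity>" and "fps_conv_radius g = \<infinity>"
  shows "fps_conv_radius (f + g) = \<infinity>"
  using fps_conv_radius_add[of f g] assms by (metis ereal_infty_less_eq(1) min.idem)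

lemma fps_conv_radius_diff_eq_infinity [simp]:
  fixes f g :: "'a :: {banach, real_normed_div_algebra} fps"
  assumes "fps_conv_radius f = \<infinity>" and "fps_conv_radius g = \<infinity>"
  shows "fps_conv_radius (f - g) = \<infinity>"
  using fps_conv_radius_diff[of f g] assms by (metis ereal_infty_less_eq(1) min.idem)

lemma fps_conv_radius_mult_eq_infinity [simp]:
  fixes f g :: "'a :: {banach, real_normed_div_algebra} fps"
  assumes "fps_conv_radius f = \<infinity>" and "fps_conv_radius g = \<infinity>"
  shows "fps_conv_radius (f * g) = \<infinity>"
  using fps_conv_radius_mult[of f g] assms by (metis ereal_infty_less_eq(1) min.idem)

lemma has_field_derivative_eval_fps_compose [derivative_intros]:
  fixes f :: "'a :: {banach, real_normed_field} fps"
  assumes "fps_conv_radius f = \<infinity>" and "(g has_field_derivative g') (at x within A)"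
  shows "((\<lambda>x. eval_fps f (g x)) has_field_derivative eval_fps (fps_deriv f) (g x) * g')
           (at x within A)"
  using DERIV_chain2[OF has_field_derivative_eval_fps assms(2)] assms(1) by simp

lemma fps_X_mult_shift_integral0:
  fixes f :: "'a :: {semiring_1, inverse} fps"
  shows "fps_X * fps_shift 1 (fps_integral0 f) = fps_integral0 f"
  by (rule fps_ext) simp

section \<open>The power series of \<open>e\<^sup>t p\<^sub>j(t)\<close>\<close>

definition stirling_fps :: "nat \<Rightarrow> real fps" where
  "stirling_fps j = Abs_fps (\<lambda>m. real (stirling m j) / (fact m)\<^sup>2)"

lemma stirling_le_fact: "stirling n k \<le> fact n"
proof (cases "k \<le> n")
  case True
  then have "stirling n k \<le> (\<Sum>i\<le>n. stirling n i)"
    by (intro member_le_sum) auto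
  then show ?thesis by (simp add: sum_stirling)
qed simp

lemma stirling_fps_nth_le: "\<bar>fps_nth (stirling_fps j) m\<bar> \<le> 1 / fact m"
proof -
  have "real (stirling m j) \<le> fact m"
    using stirling_le_fact[of m j] by (metis of_nat_fact of_nat_le_iff)
  then have "real (stirling m j) / (fact m)\<^sup>2 \<le> fact m / (fact m)\<^sup>2"
    by (rule divide_right_mono) simp
  also have "\<dots> = 1 / fact m"
    by (simp add: power2_eq_square)
  finally show ?thesis by (simp add: stirling_fps_def)
qed

lemma fps_conv_radius_stirling_fps [simp]: "fps_conv_radius (stirling_fps j) = \<infinity>"
  by (rule fps_conv_radius_eq_infinity_if_le_inverse_fact) (simp add: stirling_fps_nth_le)

lemma fps_conv_radius_integral_stirling_fps [simp]:
  "fps_conv_radius (fps_integral0 (stirling_fps j)) = \<infinity>"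
proof (rule fps_conv_radius_eq_infinity_if_le_inverse_fact)
  fix n
  show "norm (fps_nth (fps_integral0 (stirling_fps j)) n) \<le> 1 / fact n"
  proof (cases n)
    case (Suc m)
    have "norm (fps_nth (fps_integral0 (stirling_fps j)) n)
        = \<bar>fps_nth (stirling_fps j) m\<bar> / real (Suc m)"
      using Suc by (simp add: abs_mult divide_inverse_commute del: of_nat_Suc)
    also have "\<dots> \<le> (1 / fact m) / real (Suc m)"
      by (intro divide_right_mono stirling_fps_nth_le) simp
    also have "\<dots> = 1 / fact n"
      using Suc by simp
    finally show ?thesis .
  qed simp
qed

lemma stirling_fps_nonneg: "0 \<le> fps_nth (stirling_fps j) m"
  by (simp add: stirling_fps_def)

lemma stirling_fps_0: "stirling_fps 0 = 1"
  by (rule fps_ext) (simp add: stirling_fps_def)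

lemma stirling_fps_Suc_nth_0: "fps_nth (stirling_fps (Suc j)) 0 = 0"
  by (simp add: stirling_fps_def)

text \<open>The recurrence of the Stirling numbers, divided by \<open>(m!)\<^sup>2\<close>.\<close>
lemma stirling_fps_nth_Suc:
  "real (Suc m) ^ 2 * fps_nth (stirling_fps (Suc j)) (Suc m)
     = real m * fps_nth (stirling_fps (Suc j)) m + fps_nth (stirling_fps j) m"
proof -
  have "(fact (Suc m) :: real)\<^sup>2 = real (Suc m) ^ 2 * (fact m)\<^sup>2"
    by (simp add: power_mult_distrib)
  then show ?thesis
    by (simp add: stirling_fps_def field_simps)
qed

lemma stirling_fps_ode:
  fixes j :: nat
  defines "D \<equiv> fps_deriv (stirling_fps (Suc j))"
  shows "D + fps_X * fps_deriv D - fps_X * D = stirling_fps j"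
proof (rule fps_ext)
  fix m
  show "fps_nth (D + fps_X * fps_deriv D - fps_X * D) m = fps_nth (stirling_fps j) m"
    using stirling_fps_nth_Suc[of m j]
    by (cases m) (simp_all add: D_def power2_eq_square algebra_simps)
qed

lemma stirling_fps_deriv_diff_0:
  "fps_deriv (stirling_fps 0) - stirling_fps 0 = - fps_shift 1 (fps_integral0 (stirling_fps 0))"
  by (rule fps_ext) (simp add: stirling_fps_0)

lemma stirling_fps_deriv_diff_Suc:
  "fps_deriv (stirling_fps (Suc j)) - stirling_fps (Suc j)
     = fps_shift 1 (fps_integral0 (stirling_fps j))
       - fps_shift 1 (fps_integral0 (stirling_fps (Suc j)))"
proof (rule fps_ext)
  fix m
  let ?a = "\<lambda>i. fps_nth (stirling_fps (Suc j)) i" and ?b = "fps_nth (stirling_fps j) m"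
  have "real (Suc m) * (real (Suc m) * ?a (Suc m) - ?a m) = ?b - ?a m"
    using stirling_fps_nth_Suc[of m j] by (simp add: algebra_simps power2_eq_square)
  then have "real (Suc m) * ?a (Suc m) - ?a m = inverse (real (Suc m)) * (?b - ?a m)"
    by (simp add: field_simps del: of_nat_Suc)
  then show "fps_nth (fps_deriv (stirling_fps (Suc j)) - stirling_fps (Suc j)) m
      = fps_nth (fps_shift 1 (fps_integral0 (stirling_fps j))
          - fps_shift 1 (fps_integral0 (stirling_fps (Suc j)))) m"
    by (simp add: right_diff_distrib del: of_nat_Suc)
qed

definition hfun :: "nat \<Rightarrow> real \<Rightarrow> real" where
  "hfun j = eval_fps (stirling_fps j)"

definition Gfun :: "nat \<Rightarrow> real \<Rightarrow> real" where
  "Gfun j = eval_fps (fps_integral0 (stirling_fps j))"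

definition Qfun :: "nat \<Rightarrow> real \<Rightarrow> real" where
  "Qfun j = eval_fps (fps_shift 1 (fps_integral0 (stirling_fps j)))"

lemma pfun_eq_hfun: "pfun j t = exp (- t) * hfun j t"
proof -
  let ?c = "\<lambda>m. fps_nth (stirling_fps j) m * t ^ m"
  have "hfun j t = (\<Sum>n. ?c (n + j)) + (\<Sum>m<j. ?c m)"
    unfolding hfun_def eval_fps_def by (rule suminf_split_initial_segment) (simp add: summable_fps)
  also have "(\<Sum>m<j. ?c m) = 0"
    by (intro sum.neutral) (simp add: stirling_fps_def)
  finally show ?thesis
    by (simp add: pfun_def stirling_fps_def power2_eq_square field_simps)
qed

lemma hfun_0 [simp]: "hfun 0 x = 1"
  by (simp add: hfun_def stirling_fps_0)

lemma hfun_Suc_at_0 [simp]: "hfun (Suc j) 0 = 0"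
  by (simp add: hfun_def eval_fps_at_0 stirling_fps_Suc_nth_0)

lemma Gfun_at_0 [simp]: "Gfun j 0 = 0"
  by (simp add: Gfun_def eval_fps_at_0)

lemma Gfun_eq_mult_Qfun: "Gfun j x = x * Qfun j x"
  unfolding Gfun_def Qfun_def
  by (subst fps_X_mult_shift_integral0[symmetric], subst eval_fps_mult) simp_all

lemma hfun_ode:
  "eval_fps (fps_deriv (stirling_fps (Suc j))) x
     + x * eval_fps (fps_deriv (fps_deriv (stirling_fps (Suc j)))) x
     - x * eval_fps (fps_deriv (stirling_fps (Suc j))) x = hfun j x"
  unfolding hfun_def stirling_fps_ode[of j, symmetric]
  by (simp add: eval_fps_add eval_fps_diff eval_fps_mult)

lemma hfun_telescope:
  "(\<Sum>i\<le>j. eval_fps (fps_deriv (stirling_fps i)) x - hfun i x) = - Qfun j x"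
proof (induction j)
  case 0
  show ?case
    using arg_cong[OF stirling_fps_deriv_diff_0, of "\<lambda>f. eval_fps f x"]
    by (simp add: hfun_def Qfun_def eval_fps_diff eval_fps_minus)
next
  case (Suc j)
  then show ?case
    using arg_cong[OF stirling_fps_deriv_diff_Suc[of j], of "\<lambda>f. eval_fps f x"]
    by (simp add: hfun_def Qfun_def eval_fps_diff)
qed

lemma hfun_nonneg: "0 \<le> x \<Longrightarrow> 0 \<le> hfun j x"
  unfolding hfun_def by (rule eval_fps_nonneg) (simp_all add: stirling_fps_nonneg)

lemma deriv_hfun_nonneg: "0 \<le> x \<Longrightarrow> 0 \<le> eval_fps (fps_deriv (stirling_fps j)) x"
  by (rule eval_fps_nonneg) (simp_all add: stirling_fps_nonneg)

lemma Qfun_nonneg: "0 \<le> x \<Longrightarrow> 0 \<le> Qfun j x"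
  unfolding Qfun_def by (rule eval_fps_nonneg) (simp_all add: stirling_fps_nonneg)

lemma Gfun_nonneg: "0 \<le> x \<Longrightarrow> 0 \<le> Gfun j x"
  by (simp add: Gfun_eq_mult_Qfun Qfun_nonneg)

lemma has_real_derivative_Gfun: "(Gfun j has_real_derivative hfun j x) (at x)"
  unfolding Gfun_def hfun_def
  using has_field_derivative_eval_fps[of x "fps_integral0 (stirling_fps j)" UNIV]
  by (simp add: fps_deriv_fps_integral)

lemma Gfun_mono:
  assumes "0 \<le> s" "s \<le> t"
  shows "Gfun j s \<le> Gfun j t"
proof (rule DERIV_nonneg_imp_nondecreasing[OF assms(2)])
  fix x assume "s \<le> x"
  then show "\<exists>y. (Gfun j has_real_derivative y) (at x) \<and> 0 \<le> y"
    using assms has_real_derivative_Gfun hfun_nonneg by (meson order_trans)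
qed

lemma continuous_on_hfun: "continuous_on A (hfun j)"
  unfolding hfun_def by (intro continuous_on_subset[OF continuous_on_eval_fps]) simp

lemma borel_measurable_hfun [measurable]: "hfun j \<in> borel_measurable borel"
  unfolding hfun_def by (rule borel_measurable_eval_fps) simp

lemma borel_measurable_deriv_hfun [measurable]:
  "eval_fps (fps_deriv (stirling_fps j)) \<in> borel_measurable borel"
  by (rule borel_measurable_eval_fps) simp

lemma borel_measurable_Gfun [measurable]: "Gfun j \<in> borel_measurable borel"
  unfolding Gfun_def by (rule borel_measurable_eval_fps) simp

lemma borel_measurable_Qfun [measurable]: "Qfun j \<in> borel_measurable borel"
  unfolding Qfun_def by (rule borel_measurable_eval_fps) simp

lemma nn_integral_hfun_scaled:
  assumes "0 \<le> y" "p \<le> 1"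
  shows "(\<integral>\<^sup>+t. ennreal (exp (-(t*(1-p))) * hfun j (t*(1-p))) * indicator {0..y} t \<partial>lborel)
       = ennreal (y * exp (-(y*(1-p))) * eval_fps (fps_deriv (stirling_fps (Suc j))) (y*(1-p)))"
proof -
  define a where "a = 1 - p"
  let ?D = "eval_fps (fps_deriv (stirling_fps (Suc j)))"
  let ?D' = "eval_fps (fps_deriv (fps_deriv (stirling_fps (Suc j))))"
  have deriv: "((\<lambda>t. t * exp (-(t*a)) * ?D (t*a)) has_real_derivative
      exp (-(t*a)) * hfun j (t*a)) (at t)" for t
  proof -
    have "((\<lambda>t. t * exp (-(t*a)) * ?D (t*a)) has_real_derivative
        exp (-(t*a)) * (?D (t*a) + (t*a) * ?D' (t*a) - (t*a) * ?D (t*a))) (at t)"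
      by (auto intro!: derivative_eq_intros simp: algebra_simps)
    then show ?thesis by (simp only: hfun_ode)
  qed
  have "(\<integral>\<^sup>+t. ennreal (exp (-(t*a)) * hfun j (t*a)) * indicator {0..y} t \<partial>lborel)
      = ennreal (y * exp (-(y*a)) * ?D (y*a) - 0 * exp (-(0*a)) * ?D (0*a))"
    by (rule nn_integral_FTC_Icc[OF _ deriv])
      (use assms in \<open>auto simp: a_def intro!: mult_nonneg_nonneg hfun_nonneg\<close>)
  then show ?thesis by (simp add: a_def)
qed

lemma nn_integral_deriv_hfun:
  assumes "0 \<le> y" "q \<le> 1"
  shows "(\<integral>\<^sup>+p. ennreal (y * exp (-y) * eval_fps (fps_deriv (stirling_fps j)) (y*(1-p)))
            * indicator {q..1} p \<partial>lborel)
       = ennreal (exp (-y) * (hfun j (y*(1-q)) - hfun j 0))"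
proof -
  have deriv: "((\<lambda>p. - exp (-y) * hfun j (y*(1-p))) has_real_derivative
      y * exp (-y) * eval_fps (fps_deriv (stirling_fps j)) (y*(1-p))) (at p)" for p
    unfolding hfun_def by (auto intro!: derivative_eq_intros)
  have "(\<integral>\<^sup>+p. ennreal (y * exp (-y) * eval_fps (fps_deriv (stirling_fps j)) (y*(1-p)))
          * indicator {q..1} p \<partial>lborel)
      = ennreal (- exp (-y) * hfun j (y*(1-1)) - (- exp (-y) * hfun j (y*(1-q))))"
    by (rule nn_integral_FTC_Icc[OF _ deriv])
      (use assms in \<open>auto intro!: mult_nonneg_nonneg deriv_hfun_nonneg\<close>)
  then show ?thesis by (simp add: algebra_simps)
qed

lemma nn_integral_hfun_Gfun:
  assumes "0 \<le> s" "s \<le> t" "0 < t"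
  shows "(\<integral>\<^sup>+p. ennreal (exp (-t) * hfun j (t*(1-p))) * indicator {0..1-s/t} p \<partial>lborel)
       = ennreal (exp (-t) * (Gfun j t - Gfun j s) / t)"
proof -
  have deriv: "((\<lambda>p. - exp (-t) / t * Gfun j (t*(1-p))) has_real_derivative
      exp (-t) * hfun j (t*(1-p))) (at p)" for p
    using assms by (auto intro!: derivative_eq_intros DERIV_chain2[OF has_real_derivative_Gfun])
  have st: "0 \<le> s / t" "s / t \<le> 1"
    using assms by (auto simp: field_simps)
  have "(\<integral>\<^sup>+p. ennreal (exp (-t) * hfun j (t*(1-p))) * indicator {0..1-s/t} p \<partial>lborel)
      = ennreal (- exp (-t) / t * Gfun j (t*(1-(1-s/t))) - (- exp (-t) / t * Gfun j (t*(1-0))))"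
  proof (rule nn_integral_FTC_Icc[OF _ deriv])
    fix p assume "p \<in> {0..1-s/t}"
    then have "p \<le> 1 - s/t" by simp
    with st(1) have "p \<le> 1" by linarith
    then have "0 \<le> t * (1 - p)"
      using assms by simp
    then show "0 \<le> exp (-t) * hfun j (t*(1-p))"
      by (simp add: hfun_nonneg)
  qed (use st in auto)
  also have "t*(1-(1-s/t)) = s"
    using assms by (simp add: field_simps)
  finally show ?thesis
    using assms by (simp add: field_simps)
qed

lemma has_real_derivative_exp_sum_hfun:
  "((\<lambda>t. exp (-t) * (\<Sum>i\<le>j. hfun i t)) has_real_derivative - exp (-t) * Qfun j t) (at t)"
proof -
  have "((\<lambda>t. exp (-t) * (\<Sum>i\<le>j. hfun i t)) has_real_derivative
      exp (-t) * (\<Sum>i\<le>j. eval_fps (fps_deriv (stirling_fps i)) t - hfun i t)) (at t)"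
    unfolding hfun_def by (auto intro!: derivative_eq_intros simp: sum_subtractf algebra_simps)
  then show ?thesis by (simp only: hfun_telescope) simp
qed

lemma sum_hfun_at_0: "(\<Sum>i\<le>j. hfun i 0) = 1"
  by (induction j) auto

lemma exp_sum_hfun_le_1:
  assumes "0 \<le> s"
  shows "exp (-s) * (\<Sum>i\<le>j. hfun i s) \<le> 1"
proof -
  have "exp (-s) * (\<Sum>i\<le>j. hfun i s) \<le> exp (-0) * (\<Sum>i\<le>j. hfun i 0)"
  proof (rule DERIV_nonpos_imp_nonincreasing[OF assms])
    fix x :: real assume "0 \<le> x"
    then show "\<exists>y. ((\<lambda>t. exp (-t) * (\<Sum>i\<le>j. hfun i t)) has_real_derivative y) (at x) \<and> y \<le> 0"
      using has_real_derivative_exp_sum_hfun Qfun_nonneg by fastforce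
  qed
  then show ?thesis by (simp add: sum_hfun_at_0)
qed

lemma nn_integral_exp_Qfun:
  assumes "0 \<le> s"
  shows "(\<integral>\<^sup>+t. ennreal (exp (-t) * Qfun j t) * indicator {0..s} t \<partial>lborel)
       = ennreal (1 - exp (-s) * (\<Sum>i\<le>j. hfun i s))"
proof -
  have deriv: "((\<lambda>t. - (exp (-t) * (\<Sum>i\<le>j. hfun i t))) has_real_derivative
      exp (-t) * Qfun j t) (at t)" for t
    using DERIV_minus[OF has_real_derivative_exp_sum_hfun[of j t]] by simp
  have "(\<integral>\<^sup>+t. ennreal (exp (-t) * Qfun j t) * indicator {0..s} t \<partial>lborel)
      = ennreal (- (exp (-s) * (\<Sum>i\<le>j. hfun i s)) - (- (exp (-0) * (\<Sum>i\<le>j. hfun i 0))))"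
    by (rule nn_integral_FTC_Icc[OF _ deriv])
      (use assms in \<open>auto intro!: mult_nonneg_nonneg Qfun_nonneg\<close>)
  then show ?thesis by (simp add: sum_hfun_at_0)
qed

lemma interval_integral_exp_pfun:
  assumes "0 \<le> s"
  shows "(LBINT \<xi>=0..s. exp \<xi> * pfun j \<xi>) = Gfun j s"
proof -
  have "(LBINT \<xi>=ereal 0..ereal s. hfun j \<xi>) = Gfun j s - Gfun j 0"
    using assms has_real_derivative_Gfun
    by (intro interval_integral_FTC_finite continuous_on_hfun)
       (auto simp: has_field_derivative_at_within
          simp flip: has_real_derivative_iff_has_vector_derivative)
  then show ?thesis
    by (simp add: pfun_eq_hfun exp_minus_inverse mult.assoc[symmetric] zero_ereal_def)
qed

lemma sum_pfun: "(\<Sum>i=0..j. pfun i s) = exp (-s) * (\<Sum>i\<le>j. hfun i s)"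
  by (simp add: pfun_eq_hfun sum_distrib_left atLeast0AtMost)

lemma nn_integral_Ifun:
  assumes "0 < s"
  shows "(\<integral>\<^sup>+t. ennreal (exp (-t) / t) * indicator {s<..} t \<partial>lborel) = ennreal (Ifun s)"
proof -
  define J where "J = (\<integral>\<^sup>+t. ennreal (exp (-t) / t) * indicator {s<..} t \<partial>lborel)"
  have "J \<le> (\<integral>\<^sup>+t. ennreal (1/s) * ennreal (exponential_density 1 t) \<partial>lborel)"
    unfolding J_def
  proof (intro nn_integral_mono)
    fix t
    show "ennreal (exp (-t) / t) * indicator {s<..} t
        \<le> ennreal (1/s) * ennreal (exponential_density 1 t)"
    proof (cases "s < t")
      case True
      then have "exp (-t) / t \<le> 1/s * exp (-t)"
        using assms by (simp add: field_simps)
      then show ?thesis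
        using True assms by (simp add: exponential_density_def ennreal_mult[symmetric])
    qed simp
  qed
  also have "\<dots> = ennreal (1/s)"
    using prob_space.emeasure_space_1[OF prob_space_exponential_density[of 1]]
    by (simp add: nn_integral_cmult emeasure_density)
  finally obtain r where r: "J = ennreal r" "0 \<le> r"
    by (cases J) (auto simp: top_unique)
  have "(\<integral>\<^sup>+t. ennreal (indicator {s<..} t * (exp (-t) / t)) \<partial>lborel) = ennreal r"
    unfolding r(1)[symmetric] J_def by (intro nn_integral_cong) (simp add: indicator_def)
  then have "integral\<^sup>L lborel (\<lambda>t. indicator {s<..} t * (exp (-t) / t)) = r"
    using r assms by (subst (asm) nn_integral_eq_integrable) (auto simp: indicator_def)
  then show ?thesis
    using r by (simp add: J_def Ifun_def interval_integral_to_infinity_eq set_lebesgue_integral_def)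
qed

lemma Ifun_nonneg: "0 < s \<Longrightarrow> 0 \<le> Ifun s"
  unfolding Ifun_def interval_integral_to_infinity_eq set_lebesgue_integral_def
  by (rule Bochner_Integration.integral_nonneg) (auto simp: indicator_def)

lemma nn_integral_exp_Qfun_split:
  assumes s: "0 < s"
  shows "(\<integral>\<^sup>+t. ennreal (exp (-t) * Qfun j t) * indicator {s<..} t \<partial>lborel)
       = (\<integral>\<^sup>+t. ennreal (exp (-t) * (Gfun j t - Gfun j s) / t) * indicator {s<..} t \<partial>lborel)
         + ennreal (Gfun j s * Ifun s)"
proof -
  have "ennreal (exp (-t) * Qfun j t) * indicator {s<..} t
      = ennreal (exp (-t) * (Gfun j t - Gfun j s) / t) * indicator {s<..} t
        + ennreal (Gfun j s) * (ennreal (exp (-t) / t) * indicator {s<..} t)" for t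
  proof (cases "s < t")
    case True
    then have "0 < t" using s by simp
    then have eq:
      "exp (-t) * Qfun j t = exp (-t) * (Gfun j t - Gfun j s) / t + Gfun j s * (exp (-t) / t)"
      by (simp add: Gfun_eq_mult_Qfun[of j t] field_simps)
    have n1: "0 \<le> exp (-t) * (Gfun j t - Gfun j s) / t"
      using True s \<open>0 < t\<close> Gfun_mono[of s t j] by simp
    have n2: "0 \<le> Gfun j s" and n3: "0 \<le> exp (-t) / t"
      using s \<open>0 < t\<close> by (simp_all add: Gfun_nonneg)
    show ?thesis
      using True
      by (simp only: eq ennreal_plus[OF n1 mult_nonneg_nonneg[OF n2 n3]] ennreal_mult[OF n2 n3])
         simp
  qed simp
  then have "(\<integral>\<^sup>+t. ennreal (exp (-t) * Qfun j t) * indicator {s<..} t \<partial>lborel)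
      = (\<integral>\<^sup>+t. ennreal (exp (-t) * (Gfun j t - Gfun j s) / t) * indicator {s<..} t \<partial>lborel)
        + ennreal (Gfun j s) * (\<integral>\<^sup>+t. ennreal (exp (-t) / t) * indicator {s<..} t \<partial>lborel)"
    by (simp add: nn_integral_add nn_integral_cmult)
  then show ?thesis
    using s by (simp add: nn_integral_Ifun ennreal_mult Gfun_nonneg Ifun_nonneg)
qed

section \<open>The joint density of \<open>T\<^sub>k\<close> and \<open>P\<^sub>k\<close>\<close>

lemma (in prob_space) nn_integral_indep_var_pair:
  assumes "indep_var S X T Y" and [measurable]: "g \<in> borel_measurable (S \<Otimes>\<^sub>M T)"
  shows "(\<integral>\<^sup>+\<omega>. g (X \<omega>, Y \<omega>) \<partial>M) = (\<integral>\<^sup>+\<omega>. \<integral>\<^sup>+\<omega>'. g (X \<omega>, Y \<omega>') \<partial>M \<partial>M)"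
proof -
  have [measurable]: "random_variable S X" "random_variable T Y"
    and joint: "distr M S X \<Otimes>\<^sub>M distr M T Y = distr M (S \<Otimes>\<^sub>M T) (\<lambda>x. (X x, Y x))"
    using assms(1) unfolding indep_var_distribution_eq by auto
  interpret Y: prob_space "distr M T Y"
    by (rule prob_space_distr) simp
  have "(\<integral>\<^sup>+\<omega>. g (X \<omega>, Y \<omega>) \<partial>M) = (\<integral>\<^sup>+z. g z \<partial>(distr M S X \<Otimes>\<^sub>M distr M T Y))"
    by (simp add: joint nn_integral_distr)
  also have "\<dots> = (\<integral>\<^sup>+x. \<integral>\<^sup>+y. g (x,y) \<partial>distr M T Y \<partial>distr M S X)"
    by (rule Y.nn_integral_fst[symmetric]) simp
  also have "\<dots> = (\<integral>\<^sup>+\<omega>. \<integral>\<^sup>+y. g (X \<omega>, y) \<partial>distr M T Y \<partial>M)"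
    by (simp add: nn_integral_distr)
  also have "\<dots> = (\<integral>\<^sup>+\<omega>. \<integral>\<^sup>+\<omega>'. g (X \<omega>, Y \<omega>') \<partial>M \<partial>M)"
    by (intro nn_integral_cong) (simp add: nn_integral_distr)
  finally show ?thesis .
qed

lemma nn_integral_exponential_affine:
  fixes G :: "real \<Rightarrow> ennreal"
  assumes [measurable]: "G \<in> borel_measurable borel" and p: "0 < p"
  shows "(\<integral>\<^sup>+e. G (t + e/p) * ennreal (exp (-e)) * indicator {0..} e \<partial>lborel)
       = (\<integral>\<^sup>+y. G y * ennreal (p * exp (-(p*(y-t)))) * indicator {t..} y \<partial>lborel)"
proof -
  define f where "f y = G y * ennreal (p * exp (-(p*(y-t)))) * indicator {t..} y" for y
  have f_affine:
    "f (t + (1/p) * e) = ennreal p * (G (t + e/p) * ennreal (exp (-e)) * indicator {0..} e)" for e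
    using p by (simp add: f_def indicator_def field_simps ennreal_mult)
  have "(\<integral>\<^sup>+y. f y \<partial>lborel) = ennreal \<bar>1/p\<bar> * (\<integral>\<^sup>+e. f (t + (1/p) * e) \<partial>lborel)"
    using p by (intro nn_integral_real_affine) (auto simp: f_def)
  also have "\<dots> = ennreal (1/p) *
      (ennreal p * (\<integral>\<^sup>+e. G (t + e/p) * ennreal (exp (-e)) * indicator {0..} e \<partial>lborel))"
    unfolding f_affine using p by (simp add: nn_integral_cmult)
  also have "\<dots> = (\<integral>\<^sup>+e. G (t + e/p) * ennreal (exp (-e)) * indicator {0..} e \<partial>lborel)"
    using p by (simp add: mult.assoc[symmetric] ennreal_mult[symmetric])
  finally show ?thesis by (simp add: f_def)
qed

lemma nn_integral_uniform_scale:
  fixes G :: "real \<Rightarrow> ennreal"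
  assumes [measurable]: "G \<in> borel_measurable borel" and p: "0 < p"
  shows "(\<integral>\<^sup>+u. G (p*u) * indicator {0..1} u \<partial>lborel)
       = (\<integral>\<^sup>+q. G q * ennreal (1/p) * indicator {0..p} q \<partial>lborel)"
proof -
  define f where "f q = G q * ennreal (1/p) * indicator {0..p} q" for q
  have f_scale: "f (0 + p * u) = ennreal (1/p) * (G (p*u) * indicator {0..1} u)" for u
    using p by (auto simp: f_def indicator_def zero_le_mult_iff mult_le_cancel_left1 mult.commute)
  have "(\<integral>\<^sup>+q. f q \<partial>lborel) = ennreal \<bar>p\<bar> * (\<integral>\<^sup>+u. f (0 + p * u) \<partial>lborel)"
    using p by (intro nn_integral_real_affine) (auto simp: f_def)
  also have "\<dots> = ennreal p * (ennreal (1/p) * (\<integral>\<^sup>+u. G (p*u) * indicator {0..1} u \<partial>lborel))"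
    unfolding f_scale using p by (simp add: nn_integral_cmult)
  also have "\<dots> = (\<integral>\<^sup>+u. G (p*u) * indicator {0..1} u \<partial>lborel)"
    using p by (simp add: mult.assoc[symmetric] ennreal_mult[symmetric])
  finally show ?thesis by (simp add: f_def)
qed

definition joint_density :: "nat \<Rightarrow> real \<Rightarrow> real \<Rightarrow> ennreal" where
  "joint_density j t p =
     ennreal (exp (-t) * hfun j (t*(1-p))) * indicator {0..} t * indicator {0..1} p"

text \<open>For \<open>p > 0\<close>, the density of \<open>(t + E/p, p U)\<close> at \<open>(y, q)\<close>: the factor \<open>p\<close> of the
  exponential density and the factor \<open>1/p\<close> of the uniform one cancel.\<close>
definition step_kernel :: "real \<Rightarrow> real \<Rightarrow> real \<Rightarrow> real \<Rightarrow> ennreal" where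
  "step_kernel t p y q = (if t \<le> y \<and> 0 \<le> q \<and> q \<le> p then ennreal (exp (-(p*(y-t)))) else 0)"

definition step_expectation :: "(real \<times> real \<Rightarrow> ennreal) \<Rightarrow> real \<Rightarrow> real \<Rightarrow> ennreal" where
  "step_expectation g t p =
     (\<integral>\<^sup>+e. \<integral>\<^sup>+u. g (t + e/p, p*u) * ennreal (exp (-e)) * indicator {0..} e * indicator {0..1} u
        \<partial>lborel \<partial>lborel)"

lemma borel_measurable_joint_density [measurable]:
  "(\<lambda>x. joint_density j (T x) (P x)) \<in> borel_measurable N"
  if [measurable]: "T \<in> borel_measurable N" "P \<in> borel_measurable N"
  unfolding joint_density_def by measurable

lemma borel_measurable_step_kernel [measurable]:
  "(\<lambda>x. step_kernel (T x) (P x) (Y x) (Q x)) \<in> borel_measurable N"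
  if [measurable]: "T \<in> borel_measurable N" "P \<in> borel_measurable N"
     "Y \<in> borel_measurable N" "Q \<in> borel_measurable N"
  unfolding step_kernel_def by measurable

lemma nn_integral_joint_density_step_kernel:
  assumes y: "0 \<le> y"
  shows "(\<integral>\<^sup>+t. joint_density j t p * step_kernel t p y q \<partial>lborel)
       = ennreal (y * exp (-y) * eval_fps (fps_deriv (stirling_fps (Suc j))) (y*(1-p)))
           * indicator {0..1} p * indicator {0..p} q"
proof (cases "0 \<le> q \<and> q \<le> p \<and> p \<le> 1")
  case False
  then have "joint_density j t p * step_kernel t p y q = 0" for t
    by (auto simp: joint_density_def step_kernel_def indicator_def)
  then have "(\<integral>\<^sup>+t. joint_density j t p * step_kernel t p y q \<partial>lborel) = 0"
    by (simp only:) simp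
  then show ?thesis
    using False by (auto simp: indicator_def)
next
  case True
  then have p: "0 \<le> p" "p \<le> 1" by auto
  let ?D = "eval_fps (fps_deriv (stirling_fps (Suc j))) (y*(1-p))"
  have "joint_density j t p * step_kernel t p y q
      = ennreal (exp (-(p*y)))
        * (ennreal (exp (-(t*(1-p))) * hfun j (t*(1-p))) * indicator {0..y} t)" for t
  proof (cases "0 \<le> t \<and> t \<le> y")
    case True
    have "exp (-t) * hfun j (t*(1-p)) * exp (-(p*(y-t)))
        = exp (-(p*y)) * (exp (-(t*(1-p))) * hfun j (t*(1-p)))"
      by (simp add: algebra_simps flip: exp_add)
    moreover have "0 \<le> hfun j (t*(1-p))"
      using True p by (intro hfun_nonneg) auto
    ultimately show ?thesis
      using True \<open>0 \<le> q \<and> q \<le> p \<and> p \<le> 1\<close>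
      by (simp add: joint_density_def step_kernel_def indicator_def mult.assoc flip: ennreal_mult)
  qed (auto simp: joint_density_def step_kernel_def indicator_def)
  then have "(\<integral>\<^sup>+t. joint_density j t p * step_kernel t p y q \<partial>lborel)
      = ennreal (exp (-(p*y))) * ennreal (y * exp (-(y*(1-p))) * ?D)"
    using y p by (simp add: nn_integral_cmult nn_integral_hfun_scaled)
  also have "\<dots> = ennreal (exp (-(p*y)) * (y * exp (-(y*(1-p))) * ?D))"
    using y p by (simp add: ennreal_mult deriv_hfun_nonneg)
  also have "exp (-(p*y)) * (y * exp (-(y*(1-p))) * ?D) = y * exp (-y) * ?D"
    by (simp add: algebra_simps flip: exp_add)
  finally show ?thesis
    using True by simp
qed

lemma joint_density_step:
  "(\<integral>\<^sup>+p. \<integral>\<^sup>+t. joint_density j t p * step_kernel t p y q \<partial>lborel \<partial>lborel)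
     = joint_density (Suc j) y q"
proof (cases "0 \<le> y \<and> 0 \<le> q \<and> q \<le> 1")
  case False
  then have "joint_density j t p * step_kernel t p y q = 0" for t p
    by (auto simp: joint_density_def step_kernel_def indicator_def)
  then have "(\<integral>\<^sup>+p. \<integral>\<^sup>+t. joint_density j t p * step_kernel t p y q \<partial>lborel \<partial>lborel) = 0"
    by (simp only:) simp
  moreover have "joint_density (Suc j) y q = 0"
    using False by (auto simp: joint_density_def indicator_def)
  ultimately show ?thesis by simp
next
  case True
  have "indicator {0..1} p * indicator {0..p} q = (indicator {q..1} p :: ennreal)" for p
    using True by (auto simp: indicator_def)
  then have "(\<integral>\<^sup>+p. \<integral>\<^sup>+t. joint_density j t p * step_kernel t p y q \<partial>lborel \<partial>lborel)
      = (\<integral>\<^sup>+p. ennreal (y * exp (-y) * eval_fps (fps_deriv (stirling_fps (Suc j))) (y*(1-p)))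
             * indicator {q..1} p \<partial>lborel)"
    using True by (simp add: nn_integral_joint_density_step_kernel mult.assoc)
  also have "\<dots> = joint_density (Suc j) y q"
    using True by (simp add: nn_integral_deriv_hfun joint_density_def)
  finally show ?thesis .
qed

lemma step_expectation_eq_step_kernel:
  fixes g :: "real \<times> real \<Rightarrow> ennreal"
  assumes [measurable]: "g \<in> borel_measurable borel" and p: "0 < p"
  shows "step_expectation g t p = (\<integral>\<^sup>+y. \<integral>\<^sup>+q. g (y,q) * step_kernel t p y q \<partial>lborel \<partial>lborel)"
proof -
  define \<Phi> where "\<Phi> y = (\<integral>\<^sup>+q. g (y,q) * ennreal (1/p) * indicator {0..p} q \<partial>lborel)" for y
  have [measurable]: "\<Phi> \<in> borel_measurable borel"
    unfolding \<Phi>_def by measurable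
  have "step_expectation g t p
      = (\<integral>\<^sup>+e. ennreal (exp (-e)) * indicator {0..} e
            * (\<integral>\<^sup>+u. g (t + e/p, p*u) * indicator {0..1} u \<partial>lborel) \<partial>lborel)"
    unfolding step_expectation_def
    by (intro nn_integral_cong) (simp add: nn_integral_cmult[symmetric] mult_ac)
  also have "\<dots> = (\<integral>\<^sup>+e. \<Phi> (t + e/p) * ennreal (exp (-e)) * indicator {0..} e \<partial>lborel)"
    unfolding \<Phi>_def
    by (intro nn_integral_cong, subst nn_integral_uniform_scale[OF _ p]) (simp_all add: mult_ac)
  also have "\<dots> = (\<integral>\<^sup>+y. \<Phi> y * ennreal (p * exp (-(p*(y-t)))) * indicator {t..} y \<partial>lborel)"
    using p by (simp add: nn_integral_exponential_affine)
  also have "\<dots> = (\<integral>\<^sup>+y. \<integral>\<^sup>+q. g (y,q) * step_kernel t p y q \<partial>lborel \<partial>lborel)"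
  proof (intro nn_integral_cong)
    fix y
    have cancel: "ennreal (1/p) * ennreal (p * exp (-(p*(y-t)))) = ennreal (exp (-(p*(y-t))))"
      using p by (simp add: ennreal_mult[symmetric])
    have "\<Phi> y * ennreal (p * exp (-(p*(y-t)))) * indicator {t..} y
        = (\<integral>\<^sup>+q. g (y,q) * ennreal (1/p) * indicator {0..p} q
              * (ennreal (p * exp (-(p*(y-t)))) * indicator {t..} y) \<partial>lborel)"
      unfolding \<Phi>_def by (simp add: nn_integral_multc) (simp only: mult.assoc)
    also have "\<dots> = (\<integral>\<^sup>+q. g (y,q) * step_kernel t p y q \<partial>lborel)"
      by (intro nn_integral_cong) (auto simp: step_kernel_def indicator_def mult.assoc cancel)
    finally show "\<Phi> y * ennreal (p * exp (-(p*(y-t)))) * indicator {t..} y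
        = (\<integral>\<^sup>+q. g (y,q) * step_kernel t p y q \<partial>lborel)" .
  qed
  finally show ?thesis .
qed

lemma step_expectation_mult_joint_density:
  fixes g :: "real \<times> real \<Rightarrow> ennreal"
  assumes [measurable]: "g \<in> borel_measurable borel" and "p \<noteq> 0"
  shows "step_expectation g t p * joint_density j t p
       = (\<integral>\<^sup>+y. \<integral>\<^sup>+q. g (y,q) * (joint_density j t p * step_kernel t p y q) \<partial>lborel \<partial>lborel)"
proof (cases "0 < p")
  case True
  have "step_expectation g t p * joint_density j t p
      = (\<integral>\<^sup>+y. (\<integral>\<^sup>+q. g (y,q) * step_kernel t p y q \<partial>lborel) * joint_density j t p \<partial>lborel)"
    using True by (simp add: step_expectation_eq_step_kernel nn_integral_multc)
  also have "\<dots> = (\<integral>\<^sup>+y. \<integral>\<^sup>+q. g (y,q) * step_kernel t p y q * joint_density j t p \<partial>lborel \<partial>lborel)"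
    by (intro nn_integral_cong nn_integral_multc[symmetric]) measurable
  finally show ?thesis
    by (simp add: mult_ac)
next
  case False
  with assms(2) have "joint_density j t p = 0"
    by (simp add: joint_density_def)
  then show ?thesis by simp
qed

lemma nn_integral_step_expectation_joint_density:
  fixes g :: "real \<times> real \<Rightarrow> ennreal"
  assumes [measurable]: "g \<in> borel_measurable borel"
  shows "(\<integral>\<^sup>+t. \<integral>\<^sup>+p. step_expectation g t p * joint_density j t p \<partial>lborel \<partial>lborel)
       = (\<integral>\<^sup>+t. \<integral>\<^sup>+p. g (t,p) * joint_density (Suc j) t p \<partial>lborel \<partial>lborel)"
proof -
  define F where "F t p y q = g (y,q) * (joint_density j t p * step_kernel t p y q)" for t p y q
  have [measurable]: "(\<lambda>x. F (T x) (P x) (Y x) (Q x)) \<in> borel_measurable N"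
    if [measurable]: "T \<in> borel_measurable N" "P \<in> borel_measurable N"
      "Y \<in> borel_measurable N" "Q \<in> borel_measurable N" for T P Y Q and N :: "'b measure"
    unfolding F_def by measurable
  have "(\<integral>\<^sup>+t. \<integral>\<^sup>+p. step_expectation g t p * joint_density j t p \<partial>lborel \<partial>lborel)
      = (\<integral>\<^sup>+t. \<integral>\<^sup>+p. \<integral>\<^sup>+y. \<integral>\<^sup>+q. F t p y q \<partial>lborel \<partial>lborel \<partial>lborel \<partial>lborel)"
    using AE_lborel_singleton[of 0] unfolding F_def
    by (intro nn_integral_cong nn_integral_cong_AE)
       (auto elim!: eventually_mono simp: step_expectation_mult_joint_density)
  also have "\<dots> = (\<integral>\<^sup>+t. \<integral>\<^sup>+y. \<integral>\<^sup>+p. \<integral>\<^sup>+q. F t p y q \<partial>lborel \<partial>lborel \<partial>lborel \<partial>lborel)"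
    by (intro nn_integral_cong lborel_pair.Fubini') measurable
  also have "\<dots> = (\<integral>\<^sup>+t. \<integral>\<^sup>+y. \<integral>\<^sup>+q. \<integral>\<^sup>+p. F t p y q \<partial>lborel \<partial>lborel \<partial>lborel \<partial>lborel)"
    by (intro nn_integral_cong lborel_pair.Fubini') measurable
  also have "\<dots> = (\<integral>\<^sup>+y. \<integral>\<^sup>+t. \<integral>\<^sup>+q. \<integral>\<^sup>+p. F t p y q \<partial>lborel \<partial>lborel \<partial>lborel \<partial>lborel)"
    by (intro lborel_pair.Fubini') measurable
  also have "\<dots> = (\<integral>\<^sup>+y. \<integral>\<^sup>+q. \<integral>\<^sup>+t. \<integral>\<^sup>+p. F t p y q \<partial>lborel \<partial>lborel \<partial>lborel \<partial>lborel)"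
    by (intro nn_integral_cong lborel_pair.Fubini') measurable
  also have "\<dots> = (\<integral>\<^sup>+y. \<integral>\<^sup>+q. \<integral>\<^sup>+p. \<integral>\<^sup>+t. F t p y q \<partial>lborel \<partial>lborel \<partial>lborel \<partial>lborel)"
    by (intro nn_integral_cong lborel_pair.Fubini') measurable
  also have "\<dots> = (\<integral>\<^sup>+y. \<integral>\<^sup>+q. g (y,q) * joint_density (Suc j) y q \<partial>lborel \<partial>lborel)"
    unfolding F_def by (simp add: nn_integral_cmult joint_density_step)
  finally show ?thesis .
qed

lemma nn_integral_joint_density_gt:
  assumes s: "0 \<le> s"
  shows "(\<integral>\<^sup>+p. indicator {x. s < fst x * (1 - snd x)} (t, p) * joint_density j t p \<partial>lborel)
       = ennreal (exp (-t) * (Gfun j t - Gfun j s) / t) * indicator {s<..} t"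
proof (cases "s < t")
  case False
  have "indicator {x. s < fst x * (1 - snd x)} (t, p) * joint_density j t p = 0" for p
  proof (cases "0 \<le> t \<and> 0 \<le> p \<and> p \<le> 1")
    case True
    then have "t * (1 - p) \<le> s"
      using False mult_left_le[of "1 - p" t] by linarith
    then show ?thesis by simp
  qed (auto simp: joint_density_def)
  then have "(\<integral>\<^sup>+p. indicator {x. s < fst x * (1 - snd x)} (t, p) * joint_density j t p \<partial>lborel)
      = 0"
    by (simp only:) simp
  then show ?thesis
    using False by simp
next
  case True
  then have t: "0 < t" "0 \<le> s / t"
    using s by auto
  have "AE p in lborel. indicator {x. s < fst x * (1 - snd x)} (t, p) * joint_density j t p
      = ennreal (exp (-t) * hfun j (t*(1-p))) * indicator {0..1-s/t} p"
    using AE_lborel_singleton[of "1 - s/t"]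
  proof eventually_elim
    case (elim p)
    have "s < t * (1 - p) \<longleftrightarrow> p < 1 - s/t"
      using t by (simp add: field_simps)
    then show ?case
      using elim t by (auto simp: joint_density_def indicator_def)
  qed
  then show ?thesis
    using True s by (simp add: nn_integral_cong_AE nn_integral_hfun_Gfun)
qed

section \<open>The tail of \<open>A\<^sub>k\<close>\<close>

definition Pvar :: "(nat \<Rightarrow> 'a \<Rightarrow> real) \<Rightarrow> nat \<Rightarrow> 'a \<Rightarrow> real" where
  "Pvar U k \<omega> = (\<Prod>l=1..k. U l \<omega>)"

definition Tvar :: "(nat \<Rightarrow> 'a \<Rightarrow> real) \<Rightarrow> (nat \<Rightarrow> 'a \<Rightarrow> real) \<Rightarrow> nat \<Rightarrow> 'a \<Rightarrow> real" where
  "Tvar E U k \<omega> = (\<Sum>i=1..k. E i \<omega> / Pvar U (i - 1) \<omega>)"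

lemma Avar_eq: "Avar E U k \<omega> = Tvar E U k \<omega> * (1 - Pvar U k \<omega>)"
  by (simp add: Avar_def Tvar_def Pvar_def)

lemma Pvar_Suc: "Pvar U (Suc k) \<omega> = Pvar U k \<omega> * U (Suc k) \<omega>"
  by (simp add: Pvar_def)

lemma Tvar_Suc: "Tvar E U (Suc k) \<omega> = Tvar E U k \<omega> + E (Suc k) \<omega> / Pvar U k \<omega>"
  by (simp add: Tvar_def)

locale exp_uniform_sequence = prob_space M for M :: "'a measure" +
  fixes E U :: "nat \<Rightarrow> 'a \<Rightarrow> real"
  assumes indep: "prob_space.indep_vars M (\<lambda>_. borel)
           (\<lambda>i. case i of Inl j \<Rightarrow> E j | Inr j \<Rightarrow> U j)
           (Inl ` {1..} \<union> Inr ` {1..})"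
    and distributed_E: "\<And>j. j \<ge> 1 \<Longrightarrow> distributed M lborel (E j) (exponential_density 1)"
    and distr_U: "\<And>j. j \<ge> 1 \<Longrightarrow> distr M lborel (U j) = uniform_measure lborel {0..1}"
begin

abbreviation X :: "nat + nat \<Rightarrow> 'a \<Rightarrow> real" where
  "X \<equiv> \<lambda>i. case i of Inl j \<Rightarrow> E j | Inr j \<Rightarrow> U j"

lemma measurable_E [measurable]: "1 \<le> j \<Longrightarrow> E j \<in> borel_measurable M"
  using indep unfolding indep_vars_def by (auto dest!: bspec[where x = "Inl j"])

lemma measurable_U [measurable]: "1 \<le> j \<Longrightarrow> U j \<in> borel_measurable M"
  using indep unfolding indep_vars_def by (auto dest!: bspec[where x = "Inr j"])

lemma indep_E_U: "1 \<le> j \<Longrightarrow> indep_var borel (E j) borel (U j)"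
proof -
  assume j: "1 \<le> j"
  have "indep_var (PiM {Inl j} (\<lambda>_. borel)) (\<lambda>\<omega>. restrict (\<lambda>i. X i \<omega>) {Inl j})
                  (PiM {Inr j} (\<lambda>_. borel)) (\<lambda>\<omega>. restrict (\<lambda>i. X i \<omega>) {Inr j})"
    by (rule indep_var_restrict[OF indep]) (use j in auto)
  then have "indep_var borel ((\<lambda>x. x (Inl j)) \<circ> (\<lambda>\<omega>. restrict (\<lambda>i. X i \<omega>) {Inl j}))
                  borel ((\<lambda>x. x (Inr j)) \<circ> (\<lambda>\<omega>. restrict (\<lambda>i. X i \<omega>) {Inr j}))"
    by (rule indep_var_compose) (auto intro: measurable_component_singleton)
  then show ?thesis
    by (simp add: comp_def)
qed

lemma indep_Tvar_Pvar:
  "indep_var (borel \<Otimes>\<^sub>M borel) (\<lambda>\<omega>. (Tvar E U k \<omega>, Pvar U k \<omega>))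
     (borel \<Otimes>\<^sub>M borel) (\<lambda>\<omega>. (E (Suc k) \<omega>, U (Suc k) \<omega>))"
proof -
  define A where "A = Inl ` {1..k} \<union> Inr ` {1..k}"
  define B :: "(nat + nat) set" where "B = {Inl (Suc k), Inr (Suc k)}"
  define fA where "fA x = ((\<Sum>i=1..k. x (Inl i) / (\<Prod>l=1..i-1. x (Inr l))), (\<Prod>l=1..k. x (Inr l)))"
    for x :: "nat + nat \<Rightarrow> real"
  define fB where "fB x = (x (Inl (Suc k)), x (Inr (Suc k)))" for x :: "nat + nat \<Rightarrow> real"
  have "indep_var (PiM A (\<lambda>_. borel)) (\<lambda>\<omega>. restrict (\<lambda>i. X i \<omega>) A)
                  (PiM B (\<lambda>_. borel)) (\<lambda>\<omega>. restrict (\<lambda>i. X i \<omega>) B)"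
    by (rule indep_var_restrict[OF indep]) (auto simp: A_def B_def)
  moreover have "fA \<in> measurable (PiM A (\<lambda>_. borel)) (borel \<Otimes>\<^sub>M borel)"
    unfolding fA_def
    by (intro measurable_Pair borel_measurable_sum borel_measurable_prod borel_measurable_divide
        measurable_component_singleton) (auto simp: A_def)
  moreover have "fB \<in> measurable (PiM B (\<lambda>_. borel)) (borel \<Otimes>\<^sub>M borel)"
    unfolding fB_def by (intro measurable_Pair measurable_component_singleton) (auto simp: B_def)
  ultimately have "indep_var (borel \<Otimes>\<^sub>M borel) (fA \<circ> (\<lambda>\<omega>. restrict (\<lambda>i. X i \<omega>) A))
                  (borel \<Otimes>\<^sub>M borel) (fB \<circ> (\<lambda>\<omega>. restrict (\<lambda>i. X i \<omega>) B))"
    by (rule indep_var_compose)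
  moreover have "fA \<circ> (\<lambda>\<omega>. restrict (\<lambda>i. X i \<omega>) A) = (\<lambda>\<omega>. (Tvar E U k \<omega>, Pvar U k \<omega>))"
    by (rule ext) (auto simp: fA_def A_def Tvar_def Pvar_def intro!: sum.cong prod.cong)
  moreover have "fB \<circ> (\<lambda>\<omega>. restrict (\<lambda>i. X i \<omega>) B) = (\<lambda>\<omega>. (E (Suc k) \<omega>, U (Suc k) \<omega>))"
    by (rule ext) (auto simp: fB_def B_def)
  ultimately show ?thesis by simp
qed

lemma nn_integral_E_U:
  fixes g :: "real \<times> real \<Rightarrow> ennreal"
  assumes j: "1 \<le> j" and [measurable]: "g \<in> borel_measurable (borel \<Otimes>\<^sub>M borel)"
  shows "(\<integral>\<^sup>+\<omega>. g (E j \<omega>, U j \<omega>) \<partial>M)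
       = (\<integral>\<^sup>+e. \<integral>\<^sup>+u. g (e,u) * ennreal (exp (-e)) * indicator {0..} e * indicator {0..1} u
           \<partial>lborel \<partial>lborel)"
proof -
  note [measurable] = measurable_E[OF j] measurable_U[OF j]
  have "(\<integral>\<^sup>+\<omega>. g (E j \<omega>, U j \<omega>) \<partial>M) = (\<integral>\<^sup>+\<omega>. \<integral>\<^sup>+\<omega>'. g (E j \<omega>, U j \<omega>') \<partial>M \<partial>M)"
    by (rule nn_integral_indep_var_pair[OF indep_E_U[OF j]]) simp
  also have "\<dots> = (\<integral>\<^sup>+\<omega>. \<integral>\<^sup>+u. g (E j \<omega>, u) \<partial>uniform_measure lborel {0..1} \<partial>M)"
    by (intro nn_integral_cong) (simp add: nn_integral_distr flip: distr_U[OF j])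
  also have "\<dots> = (\<integral>\<^sup>+e. \<integral>\<^sup>+u. g (e, u) * indicator {0..1} u \<partial>lborel
                       \<partial>density lborel (exponential_density 1))"
    by (simp add: nn_integral_uniform_measure divide_ennreal_def nn_integral_distr
        flip: distributed_distr_eq_density[OF distributed_E[OF j]])
  also have "\<dots> = (\<integral>\<^sup>+e. ennreal (exp (-e)) * indicator {0..} e
                       * (\<integral>\<^sup>+u. g (e, u) * indicator {0..1} u \<partial>lborel) \<partial>lborel)"
    by (subst nn_integral_density)
       (auto intro!: nn_integral_cong simp: exponential_density_def indicator_def)
  also have "\<dots> = (\<integral>\<^sup>+e. \<integral>\<^sup>+u. g (e,u) * ennreal (exp (-e)) * indicator {0..} e * indicator {0..1} u
      \<partial>lborel \<partial>lborel)"
    by (intro nn_integral_cong) (simp add: nn_integral_cmult[symmetric] mult_ac)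
  finally show ?thesis .
qed

lemma nn_integral_Tvar_Pvar_Suc:
  fixes g :: "real \<times> real \<Rightarrow> ennreal"
  assumes [measurable]: "g \<in> borel_measurable (borel \<Otimes>\<^sub>M borel)"
  shows "(\<integral>\<^sup>+\<omega>. g (Tvar E U (Suc k) \<omega>, Pvar U (Suc k) \<omega>) \<partial>M)
       = (\<integral>\<^sup>+\<omega>. step_expectation g (Tvar E U k \<omega>) (Pvar U k \<omega>) \<partial>M)"
proof -
  have [measurable]: "Tvar E U k \<in> borel_measurable M" "Pvar U k \<in> borel_measurable M"
    unfolding Tvar_def Pvar_def by measurable
  let ?step = "\<lambda>(a, b). g (fst a + fst b / snd a, snd a * snd b)"
  have "(\<integral>\<^sup>+\<omega>. g (Tvar E U (Suc k) \<omega>, Pvar U (Suc k) \<omega>) \<partial>M)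
      = (\<integral>\<^sup>+\<omega>. ?step ((Tvar E U k \<omega>, Pvar U k \<omega>), (E (Suc k) \<omega>, U (Suc k) \<omega>)) \<partial>M)"
    by (simp add: Tvar_Suc Pvar_Suc)
  also have "\<dots> = (\<integral>\<^sup>+\<omega>. \<integral>\<^sup>+\<omega>'.
      ?step ((Tvar E U k \<omega>, Pvar U k \<omega>), (E (Suc k) \<omega>', U (Suc k) \<omega>')) \<partial>M \<partial>M)"
    by (rule nn_integral_indep_var_pair[OF indep_Tvar_Pvar]) measurable
  also have "\<dots> = (\<integral>\<^sup>+\<omega>. step_expectation g (Tvar E U k \<omega>) (Pvar U k \<omega>) \<partial>M)"
  proof (intro nn_integral_cong)
    fix \<omega>
    let ?h = "\<lambda>(e, u). g (Tvar E U k \<omega> + e / Pvar U k \<omega>, Pvar U k \<omega> * u)"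
    have "?h \<in> borel_measurable (borel \<Otimes>\<^sub>M borel)"
      by measurable
    from nn_integral_E_U[OF _ this]
    show "(\<integral>\<^sup>+\<omega>'. ?step ((Tvar E U k \<omega>, Pvar U k \<omega>), (E (Suc k) \<omega>', U (Suc k) \<omega>')) \<partial>M)
        = step_expectation g (Tvar E U k \<omega>) (Pvar U k \<omega>)"
      by (simp add: step_expectation_def)
  qed
  finally show ?thesis .
qed

lemma nn_integral_Tvar_Pvar:
  fixes g :: "real \<times> real \<Rightarrow> ennreal"
  assumes "g \<in> borel_measurable borel"
  shows "(\<integral>\<^sup>+\<omega>. g (Tvar E U (Suc j) \<omega>, Pvar U (Suc j) \<omega>) \<partial>M)
       = (\<integral>\<^sup>+t. \<integral>\<^sup>+p. g (t,p) * joint_density j t p \<partial>lborel \<partial>lborel)"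
  using assms
proof (induction j arbitrary: g)
  case 0
  then have [measurable]: "g \<in> borel_measurable (borel \<Otimes>\<^sub>M borel)"
    by (simp add: borel_prod)
  have "(\<integral>\<^sup>+\<omega>. g (Tvar E U 1 \<omega>, Pvar U 1 \<omega>) \<partial>M)
      = (\<integral>\<^sup>+e. \<integral>\<^sup>+u. g (e,u) * ennreal (exp (-e)) * indicator {0..} e * indicator {0..1} u
          \<partial>lborel \<partial>lborel)"
    by (simp add: Tvar_def Pvar_def nn_integral_E_U)
  then show ?case
    by (simp add: joint_density_def mult_ac)
next
  case (Suc j)
  then have [measurable]: "g \<in> borel_measurable (borel \<Otimes>\<^sub>M borel)"
    by (simp add: borel_prod)
  have "(\<lambda>x. step_expectation g (fst x) (snd x)) \<in> borel_measurable (borel \<Otimes>\<^sub>M borel)"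
    unfolding step_expectation_def by measurable
  then have step_measurable: "(\<lambda>x. step_expectation g (fst x) (snd x)) \<in> borel_measurable borel"
    by (simp add: borel_prod)
  have "(\<integral>\<^sup>+\<omega>. step_expectation g (Tvar E U (Suc j) \<omega>) (Pvar U (Suc j) \<omega>) \<partial>M)
      = (\<integral>\<^sup>+t. \<integral>\<^sup>+p. step_expectation g t p * joint_density j t p \<partial>lborel \<partial>lborel)"
    using Suc.IH[OF step_measurable] by simp
  then show ?case
    using Suc.prems
    by (simp add: nn_integral_Tvar_Pvar_Suc nn_integral_step_expectation_joint_density)
qed

lemma nn_integral_exp_Qfun_total:
  "(\<integral>\<^sup>+t. ennreal (exp (-t) * Qfun j t) * indicator {0<..} t \<partial>lborel) = 1"
proof -
  have "1 = (\<integral>\<^sup>+\<omega>. 1 \<partial>M)"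
    by (simp add: emeasure_space_1)
  also have "\<dots> = (\<integral>\<^sup>+t. \<integral>\<^sup>+p. joint_density j t p \<partial>lborel \<partial>lborel)"
    using nn_integral_Tvar_Pvar[of "\<lambda>_. 1" j] by simp
  also have "\<dots> = (\<integral>\<^sup>+t. \<integral>\<^sup>+p. indicator {x. 0 < fst x * (1 - snd x)} (t, p) * joint_density j t p
                       \<partial>lborel \<partial>lborel)"
  proof (rule nn_integral_cong_AE)
    show "AE t in lborel. (\<integral>\<^sup>+p. joint_density j t p \<partial>lborel)
        = (\<integral>\<^sup>+p. indicator {x. 0 < fst x * (1 - snd x)} (t, p) * joint_density j t p \<partial>lborel)"
      using AE_lborel_singleton[of 0]
    proof eventually_elim
      case (elim t)
      have "joint_density j t p
          = indicator {x. 0 < fst x * (1 - snd x)} (t, p) * joint_density j t p"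
        if "p \<noteq> 1" for p
        using elim that by (cases "0 < t") (auto simp: joint_density_def indicator_def)
      then show ?case
        using AE_lborel_singleton[of 1] by (intro nn_integral_cong_AE) (auto elim: eventually_mono)
    qed
  qed
  also have "\<dots> = (\<integral>\<^sup>+t. ennreal (exp (-t) * Qfun j t) * indicator {0<..} t \<partial>lborel)"
    by (intro nn_integral_cong, subst nn_integral_joint_density_gt)
       (auto simp: Gfun_eq_mult_Qfun indicator_def)
  finally show ?thesis ..
qed

lemma nn_integral_exp_Qfun_tail:
  assumes s: "0 \<le> s"
  shows "(\<integral>\<^sup>+t. ennreal (exp (-t) * Qfun j t) * indicator {s<..} t \<partial>lborel)
       = ennreal (exp (-s) * (\<Sum>i\<le>j. hfun i s))"
proof -
  define R where "R = exp (-s) * (\<Sum>i\<le>j. hfun i s)"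
  define F where "F t = ennreal (exp (-t) * Qfun j t)" for t
  have R: "0 \<le> R" "R \<le> 1"
    using s exp_sum_hfun_le_1[of s j]
    by (auto simp: R_def intro!: mult_nonneg_nonneg sum_nonneg hfun_nonneg)
  have "1 = (\<integral>\<^sup>+t. F t * indicator {0<..} t \<partial>lborel)"
    using nn_integral_exp_Qfun_total[of j] by (simp add: F_def)
  also have "\<dots> = (\<integral>\<^sup>+t. F t * indicator {0..s} t + F t * indicator {s<..} t \<partial>lborel)"
  proof (rule nn_integral_cong_AE)
    show "AE t in lborel.
        F t * indicator {0<..} t = F t * indicator {0..s} t + F t * indicator {s<..} t"
      using AE_lborel_singleton[of 0] by eventually_elim (use s in \<open>auto simp: indicator_def\<close>)
  qed
  also have "\<dots> = ennreal (1 - R) + (\<integral>\<^sup>+t. F t * indicator {s<..} t \<partial>lborel)"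
    using s by (simp add: nn_integral_add F_def R_def nn_integral_exp_Qfun)
  finally have "ennreal (1 - R) + (\<integral>\<^sup>+t. F t * indicator {s<..} t \<partial>lborel)
      = ennreal (1 - R) + ennreal R"
    using R by (simp flip: ennreal_plus)
  then show ?thesis
    by (simp add: ennreal_add_left_cancel F_def R_def)
qed

lemma emeasure_Avar_gt:
  assumes s: "0 < s"
  shows "emeasure M {\<omega> \<in> space M. s < Avar E U (Suc j) \<omega>}
       = (\<integral>\<^sup>+t. ennreal (exp (-t) * (Gfun j t - Gfun j s) / t) * indicator {s<..} t \<partial>lborel)"
proof -
  let ?S = "{x :: real \<times> real. s < fst x * (1 - snd x)}"
  have "Measurable.pred (borel \<Otimes>\<^sub>M borel) (\<lambda>x::real \<times> real. s < fst x * (1 - snd x))"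
    by measurable
  then have [measurable]: "?S \<in> sets borel"
    by (simp add: pred_def space_pair_measure borel_prod)
  have [measurable]: "Tvar E U (Suc j) \<in> borel_measurable M" "Pvar U (Suc j) \<in> borel_measurable M"
    unfolding Tvar_def Pvar_def by measurable
  have "emeasure M {\<omega> \<in> space M. s < Avar E U (Suc j) \<omega>}
      = (\<integral>\<^sup>+\<omega>. indicator {\<omega> \<in> space M. s < Avar E U (Suc j) \<omega>} \<omega> \<partial>M)"
    by (rule nn_integral_indicator[symmetric]) (simp add: Avar_eq)
  also have "\<dots> = (\<integral>\<^sup>+\<omega>. indicator ?S (Tvar E U (Suc j) \<omega>, Pvar U (Suc j) \<omega>) \<partial>M)"
    by (intro nn_integral_cong) (simp add: Avar_eq indicator_def)
  also have "\<dots> = (\<integral>\<^sup>+t. \<integral>\<^sup>+p. indicator ?S (t, p) * joint_density j t p \<partial>lborel \<partial>lborel)"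
    by (rule nn_integral_Tvar_Pvar) measurable
  also have "\<dots> = (\<integral>\<^sup>+t. ennreal (exp (-t) * (Gfun j t - Gfun j s) / t) * indicator {s<..} t \<partial>lborel)"
    using s by (simp add: nn_integral_joint_density_gt)
  finally show ?thesis .
qed

lemma measure_Avar_gt:
  assumes s: "0 < s"
  shows "measure M {\<omega> \<in> space M. s < Avar E U (Suc j) \<omega>}
       = exp (-s) * (\<Sum>i\<le>j. hfun i s) - Gfun j s * Ifun s"
proof -
  define P where
    "P = (\<integral>\<^sup>+t. ennreal (exp (-t) * (Gfun j t - Gfun j s) / t) * indicator {s<..} t \<partial>lborel)"
  have GI: "0 \<le> Gfun j s * Ifun s"
    using s by (simp add: Gfun_nonneg Ifun_nonneg)
  have sum: "ennreal (exp (-s) * (\<Sum>i\<le>j. hfun i s)) = P + ennreal (Gfun j s * Ifun s)"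
    using s by (simp add: P_def flip: nn_integral_exp_Qfun_tail nn_integral_exp_Qfun_split)
  then have "P = ennreal (exp (-s) * (\<Sum>i\<le>j. hfun i s)) - ennreal (Gfun j s * Ifun s)"
    by simp
  then have "P = ennreal (exp (-s) * (\<Sum>i\<le>j. hfun i s) - Gfun j s * Ifun s)"
    using GI by (simp add: ennreal_minus)
  moreover have "Gfun j s * Ifun s \<le> exp (-s) * (\<Sum>i\<le>j. hfun i s)"
  proof -
    have "ennreal (Gfun j s * Ifun s) \<le> ennreal (exp (-s) * (\<Sum>i\<le>j. hfun i s))"
      unfolding sum by simp
    then show ?thesis
      using s by (simp add: ennreal_le_iff sum_nonneg hfun_nonneg)
  qed
  ultimately show ?thesis
    using s by (simp add: measure_def emeasure_Avar_gt P_def)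
qed

end

theorem theorem1:
  fixes M :: "'a measure" and E U :: "nat \<Rightarrow> 'a \<Rightarrow> real" and k :: nat and s :: real
  assumes "prob_space M"
    and "prob_space.indep_vars M (\<lambda>_. borel)
           (\<lambda>i. case i of Inl j \<Rightarrow> E j | Inr j \<Rightarrow> U j)
           (Inl ` {1..} \<union> Inr ` {1..})"
    and "\<And>j. j \<ge> 1 \<Longrightarrow> distributed M lborel (E j) (exponential_density 1)"
    and "\<And>j. j \<ge> 1 \<Longrightarrow> distr M lborel (U j) = uniform_measure lborel {0..1}"
    and "k \<ge> 1" and "s > 0"
  shows "measure M {\<omega> \<in> space M. Avar E U k \<omega> > s}
           = - Ifun s * (LBINT \<xi>=0..s. exp \<xi> * pfun (k - 1) \<xi>)
             + (\<Sum>j=0..k-1. pfun j s)"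
proof -
  interpret exp_uniform_sequence M E U
    using assms(1-4) by (simp add: exp_uniform_sequence_def exp_uniform_sequence_axioms_def)
  obtain j where k: "k = Suc j"
    using assms(5) by (cases k) auto
  show ?thesis
    using measure_Avar_gt[OF assms(6), of j] assms(6)
    by (simp add: k interval_integral_exp_pfun sum_pfun)
qed

end
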